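(* For an $L$-layer ADMM-CSNet with Gaussian initialization $\mathbf W_0=(\mathbf W_{10},\mathbf W_{20})$ (i.i.d. $\mathcal N(0,1)$ entries) and any weights $\mathbf W_1,\mathbf W_2$ with $\|\mathbf W_1-\mathbf W_{10}\|\le R_1$, $\|\mathbf W_2-\mathbf W_{20}\|\le R_2$, we have for every $s\in[m]$ $$\|\mathbf b_s^l-\mathbf b^l_{s,0}\|=\tilde O(1/\sqrt m)\quad\forall\,l\in[L-1].$$
   Context: Fix $\lambda>0$ and $\sigma(x)=\log(1+e^{x-\lambda})-\log(1+e^{-x-\lambda})$ (componentwise), $L_\sigma$-Lipschitz and $\beta_\sigma$-smooth. ADMM-CSNet: input $\mathbf y\in\mathbb R^n$ with $|y_i|\le C_y$, initial $\mathbf z^0,\mathbf u^0$ with $|z^0_i|\le C_z$, $|u^0_i|\le C_u$; $\mathbf x^l=\frac1{\sqrt n}W_1^l\mathbf y+\frac1{\sqrt m}W_2^l(\mathbf z^{l-1}-\mathbf u^{l-1})$, $\mathbf z^l=\sigma(\mathbf x^l+\mathbf u^{l-1})$, $\mathbf u^l=\mathbf u^{l-1}+\mathbf x^l-\mathbf z^l$, $W_1^l\in\mathbb R^{m\times n}$, $W_2^l\in\mathbb R^{m\times m}$, output $\mathbf f=\frac1{\sqrt m}\mathbf z^L$, $f_s$ its $s$-th entry. $\mathbf b_s^l=\partial f_s/\partial\mathbf z^l$ at weights $(\mathbf W_1,\mathbf W_2)$ and $\mathbf b^l_{s,0}$ the same at $\mathbf W_0$. Weight distances are Frobenius norms over all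 entries; vector norms are Euclidean. $\tilde O$ is with respect to $m$ (suppressing logarithmic factors), holding with high probability over the initialization. *)

theory Defs
  imports "HOL-Probability.Probability"
begin

definition sigma_act :: "real \<Rightarrow> real \<Rightarrow> real" where
  "sigma_act lam x = ln (1 + exp (x - lam)) - ln (1 + exp (- x - lam))"

(* Vectors of R^k are functions nat => real (only indices < k matter);
   matrices are nat => nat => real; a layer-indexed weight family is nat => nat => nat => real
   (layer l, row i, column j). *)

definition admm_layer ::
  "real \<Rightarrow> nat \<Rightarrow> nat \<Rightarrow> (nat \<Rightarrow> nat \<Rightarrow> real) \<Rightarrow> (nat \<Rightarrow> nat \<Rightarrow> real) \<Rightarrow>
   (nat \<Rightarrow> real) \<Rightarrow> (nat \<Rightarrow> real) \<times> (nat \<Rightarrow> real) \<Rightarrow> (nat \<Rightarrow> real) \<times> (nat \<Rightarrow> real)" where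
  "admm_layer lam n m W1l W2l y zu =
     (let z = fst zu; u = snd zu;
          x = (\<lambda>i. (1 / sqrt (real n)) * (\<Sum>j<n. W1l i j * y j)
                   + (1 / sqrt (real m)) * (\<Sum>j<m. W2l i j * (z j - u j)));
          z' = (\<lambda>i. sigma_act lam (x i + u i));
          u' = (\<lambda>i. u i + x i - z' i)
      in (z', u'))"

(* admm_run ... a k zu applies layers a+1, ..., a+k starting from state zu *)
fun admm_run ::
  "real \<Rightarrow> nat \<Rightarrow> nat \<Rightarrow> (nat \<Rightarrow> nat \<Rightarrow> nat \<Rightarrow> real) \<Rightarrow> (nat \<Rightarrow> nat \<Rightarrow> nat \<Rightarrow> real) \<Rightarrow>
   (nat \<Rightarrow> real) \<Rightarrow> nat \<Rightarrow> nat \<Rightarrow> (nat \<Rightarrow> real) \<times> (nat \<Rightarrow> real) \<Rightarrow> (nat \<Rightarrow> real) \<times> (nat \<Rightarrow> real)" where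
  "admm_run lam n m W1 W2 y a 0 zu = zu"
| "admm_run lam n m W1 W2 y a (Suc k) zu =
     admm_layer lam n m (W1 (a + Suc k)) (W2 (a + Suc k)) y (admm_run lam n m W1 W2 y a k zu)"

definition admm_state where
  "admm_state lam n m W1 W2 y z0 u0 l = admm_run lam n m W1 W2 y 0 l (z0, u0)"

(* b_s^l = d f_s / d z^l, f = z^L / sqrt m, where f_s is viewed as a function of (z^l, u^l)
   through layers l+1..L and differentiated in z^l (u^l held fixed); j-th component *)
definition admm_b ::
  "real \<Rightarrow> nat \<Rightarrow> nat \<Rightarrow> nat \<Rightarrow> (nat \<Rightarrow> nat \<Rightarrow> nat \<Rightarrow> real) \<Rightarrow> (nat \<Rightarrow> nat \<Rightarrow> nat \<Rightarrow> real) \<Rightarrow>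
   (nat \<Rightarrow> real) \<Rightarrow> (nat \<Rightarrow> real) \<Rightarrow> (nat \<Rightarrow> real) \<Rightarrow> nat \<Rightarrow> nat \<Rightarrow> nat \<Rightarrow> real" where
  "admm_b lam n m L W1 W2 y z0 u0 s l j =
     (let zu = admm_state lam n m W1 W2 y z0 u0 l
      in deriv (\<lambda>t. fst (admm_run lam n m W1 W2 y l (L - l) ((fst zu)(j := t), snd zu)) s / sqrt (real m))
               (fst zu j))"

definition vnorm :: "nat \<Rightarrow> (nat \<Rightarrow> real) \<Rightarrow> real" where
  "vnorm k v = sqrt (\<Sum>j<k. (v j)\<^sup>2)"

definition wdist :: "nat \<Rightarrow> nat \<Rightarrow> nat \<Rightarrow> (nat \<Rightarrow> nat \<Rightarrow> nat \<Rightarrow> real) \<Rightarrow> (nat \<Rightarrow> nat \<Rightarrow> nat \<Rightarrow> real) \<Rightarrow> real" where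
  "wdist L nr nc W V = sqrt (\<Sum>l\<in>{1..L}. \<Sum>i<nr. \<Sum>j<nc. (W l i j - V l i j)\<^sup>2)"

(* Index set of the initialization entries: (1,l,i,j) for W_1^l (m x n), (2,l,i,j) for W_2^l (m x m) *)
definition init_index :: "nat \<Rightarrow> nat \<Rightarrow> nat \<Rightarrow> (nat \<times> nat \<times> nat \<times> nat) set" where
  "init_index L n m =
     {(1, l, i, j) | l i j. l \<in> {1..L} \<and> i < m \<and> j < n} \<union>
     {(2, l, i, j) | l i j. l \<in> {1..L} \<and> i < m \<and> j < m}"

definition gauss_init :: "nat \<Rightarrow> nat \<Rightarrow> nat \<Rightarrow> (nat \<times> nat \<times> nat \<times> nat \<Rightarrow> real) measure" where
  "gauss_init L n m = PiM (init_index L n m) (\<lambda>_. density lborel std_normal_density)"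

definition W10_of :: "(nat \<times> nat \<times> nat \<times> nat \<Rightarrow> real) \<Rightarrow> nat \<Rightarrow> nat \<Rightarrow> nat \<Rightarrow> real" where
  "W10_of \<omega> l i j = \<omega> (1, l, i, j)"

definition W20_of :: "(nat \<times> nat \<times> nat \<times> nat \<Rightarrow> real) \<Rightarrow> nat \<Rightarrow> nat \<Rightarrow> nat \<Rightarrow> real" where
  "W20_of \<omega> l i j = \<omega> (2, l, i, j)"

end

(*
  By the chain rule, b_s^l is (1 / sqrt m) times the s-th row of the Jacobian of the layers
  l+1, ..., L with respect to z^l, which we compute by pushing tangent vectors forward through
  the network. Since 0 <= sigma' <= 2, one tangent layer multiplies the norm |dz| + |du| by at
  most 5 (1 + |W_2^l|_op / sqrt m), and linearity of the tangent map then gives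
  |b_s^l| <= (5 (1 + max_l |W_2^l|_op / sqrt m))^(L-l) / sqrt m.

  With probability at least 1 - L 2^-m every Gaussian W_20^l has operator norm O(sqrt (m log m)):
  the bilinear forms q^T W p over a grid net of the unit ball are centred normal variables of
  variance at most 16, their 2k-th moments bound their tails, and a union bound over all layers
  and pairs of net points finishes. A perturbation of Frobenius size R_2 raises the operator norm
  by at most R_2. Hence both b_s^l and b_s0^l have norm O((log m)^L / sqrt m), and so does their
  difference. Neither the weights W_1 nor the hypothesis lambda > 0 enter the bound.
*)
theory Submission
  imports Defs
begin

definition sigma_act_deriv :: "real \<Rightarrow> real \<Rightarrow> real" where
  "sigma_act_deriv lam x = exp (x - lam) / (1 + exp (x - lam)) + exp (- x - lam) / (1 + exp (- x - lam))"

lemma sigma_act_has_real_derivative: "(sigma_act lam has_real_derivative sigma_act_deriv lam x) (at x)"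
proof -
  have "((\<lambda>x. ln (1 + exp (x - lam)) - ln (1 + exp (- x - lam))) has_real_derivative
        (1 / (1 + exp (x - lam))) * (exp (x - lam) * 1) - (1 / (1 + exp (- x - lam))) * (exp (- x - lam) * (- 1))) (at x)"
    by (rule derivative_eq_intros refl | simp add: add_pos_pos)+
  then show ?thesis unfolding sigma_act_def[abs_def] sigma_act_deriv_def by simp
qed

lemma sigma_act_deriv_nonneg: "0 \<le> sigma_act_deriv lam x"
  unfolding sigma_act_deriv_def by (simp add: add_pos_pos)

lemma sigma_act_deriv_le_2: "sigma_act_deriv lam x \<le> 2"
proof -
  have "exp y / (1 + exp y) \<le> 1" for y :: real by (simp add: add_pos_pos)
  from this[of "x - lam"] this[of "- x - lam"] show ?thesis
    unfolding sigma_act_deriv_def by linarith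
qed

lemma vnorm_eq_L2_set: "vnorm m v = L2_set v {..<m}"
  by (simp add: vnorm_def L2_set_def)

lemma vnorm_nonneg: "0 \<le> vnorm m v"
  by (simp add: vnorm_eq_L2_set)

lemma power2_vnorm: "(vnorm m v)\<^sup>2 = (\<Sum>i<m. (v i)\<^sup>2)"
  unfolding vnorm_def by (simp add: sum_nonneg)

lemma vnorm_cong: "(\<And>i. i < m \<Longrightarrow> v i = w i) \<Longrightarrow> vnorm m v = vnorm m w"
  unfolding vnorm_def by simp

lemma vnorm_zero [simp]: "vnorm m (\<lambda>_. 0) = 0"
  by (simp add: vnorm_def)

lemma vnorm_mult: "vnorm m (\<lambda>i. c * v i) = \<bar>c\<bar> * vnorm m v"
  unfolding vnorm_def by (simp add: power_mult_distrib sum_distrib_left[symmetric] real_sqrt_mult)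

lemma vnorm_minus: "vnorm m (\<lambda>i. - v i) = vnorm m v"
  by (simp add: vnorm_def)

lemma vnorm_add_le: "vnorm m (\<lambda>i. v i + w i) \<le> vnorm m v + vnorm m w"
  unfolding vnorm_eq_L2_set by (rule L2_set_triangle_ineq)

lemma vnorm_diff_le: "vnorm m (\<lambda>i. v i - w i) \<le> vnorm m v + vnorm m w"
  using vnorm_add_le[of m v "\<lambda>i. - w i"] by (simp add: vnorm_minus)

lemma vnorm_mono_abs:
  assumes "\<And>i. i < m \<Longrightarrow> \<bar>v i\<bar> \<le> \<bar>w i\<bar>"
  shows "vnorm m v \<le> vnorm m w"
  unfolding vnorm_def using assms by (intro real_sqrt_le_mono sum_mono) (simp add: abs_le_square_iff)

lemma abs_le_vnorm: "i < m \<Longrightarrow> \<bar>v i\<bar> \<le> vnorm m v"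
  using member_le_L2_set[of "{..<m}" i "\<lambda>i. \<bar>v i\<bar>"] by (simp add: vnorm_def L2_set_def)

definition vinner :: "nat \<Rightarrow> (nat \<Rightarrow> real) \<Rightarrow> (nat \<Rightarrow> real) \<Rightarrow> real" where
  "vinner m v w = (\<Sum>i<m. v i * w i)"

lemma vinner_self: "vinner m v v = (vnorm m v)\<^sup>2"
  unfolding power2_vnorm vinner_def by (simp add: power2_eq_square)

lemma vinner_add_right: "vinner m u (\<lambda>i. v i + w i) = vinner m u v + vinner m u w"
  by (simp add: vinner_def distrib_left sum.distrib)

lemma vinner_diff_left: "vinner m (\<lambda>i. u i - v i) w = vinner m u w - vinner m v w"
  by (simp add: vinner_def left_diff_distrib sum_subtractf)

lemma abs_vinner_le: "\<bar>vinner m v w\<bar> \<le> vnorm m v * vnorm m w"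
proof -
  have "\<bar>vinner m v w\<bar> \<le> (\<Sum>i<m. \<bar>v i\<bar> * \<bar>w i\<bar>)"
    unfolding vinner_def by (rule order.trans[OF sum_abs]) (simp add: abs_mult)
  also have "\<dots> \<le> vnorm m v * vnorm m w"
    unfolding vnorm_eq_L2_set by (rule L2_set_mult_ineq)
  finally show ?thesis .
qed

definition mat_vec :: "nat \<Rightarrow> (nat \<Rightarrow> nat \<Rightarrow> real) \<Rightarrow> (nat \<Rightarrow> real) \<Rightarrow> nat \<Rightarrow> real" where
  "mat_vec m M v i = (\<Sum>j<m. M i j * v j)"

lemma mat_vec_add: "mat_vec m M (\<lambda>j. v j + w j) i = mat_vec m M v i + mat_vec m M w i"
  by (simp add: mat_vec_def distrib_left sum.distrib)

lemma mat_vec_mult: "mat_vec m M (\<lambda>j. c * v j) i = c * mat_vec m M v i"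
  by (simp add: mat_vec_def sum_distrib_left mult.left_commute)

lemma vnorm_mat_vec_le_frobenius:
  "vnorm m (mat_vec m M v) \<le> sqrt (\<Sum>i<m. \<Sum>j<m. (M i j)\<^sup>2) * vnorm m v"
proof -
  have row: "(mat_vec m M v i)\<^sup>2 \<le> (\<Sum>j<m. (M i j)\<^sup>2) * (vnorm m v)\<^sup>2" for i
  proof -
    have "\<bar>mat_vec m M v i\<bar> \<le> vnorm m (M i) * vnorm m v"
      using abs_vinner_le[of m "M i" v] unfolding vinner_def mat_vec_def .
    then have "(mat_vec m M v i)\<^sup>2 \<le> (vnorm m (M i) * vnorm m v)\<^sup>2"
      by (metis abs_ge_zero power2_abs power_mono)
    then show ?thesis by (simp add: power_mult_distrib power2_vnorm)
  qed
  have "(vnorm m (mat_vec m M v))\<^sup>2 \<le> (\<Sum>i<m. (\<Sum>j<m. (M i j)\<^sup>2) * (vnorm m v)\<^sup>2)"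
    unfolding power2_vnorm[of m "mat_vec m M v"] by (intro sum_mono row)
  also have "\<dots> = (sqrt (\<Sum>i<m. \<Sum>j<m. (M i j)\<^sup>2) * vnorm m v)\<^sup>2"
    by (simp add: power_mult_distrib sum_distrib_right sum_nonneg)
  finally show ?thesis
    by (rule power2_le_imp_le) (intro mult_nonneg_nonneg real_sqrt_ge_zero sum_nonneg vnorm_nonneg zero_le_power2)
qed

definition op_norm_le :: "nat \<Rightarrow> (nat \<Rightarrow> nat \<Rightarrow> real) \<Rightarrow> real \<Rightarrow> bool" where
  "op_norm_le m M c \<longleftrightarrow> (\<forall>v. vnorm m (mat_vec m M v) \<le> c * vnorm m v)"

lemma op_norm_le_perturb:
  assumes "op_norm_le m M c" and "sqrt (\<Sum>i<m. \<Sum>j<m. (M' i j - M i j)\<^sup>2) \<le> r"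
  shows "op_norm_le m M' (c + r)"
  unfolding op_norm_le_def
proof
  fix v
  have "mat_vec m M' v = (\<lambda>i. mat_vec m M v i + mat_vec m (\<lambda>i j. M' i j - M i j) v i)"
    by (simp add: mat_vec_def fun_eq_iff sum_subtractf left_diff_distrib)
  then have "vnorm m (mat_vec m M' v) \<le> vnorm m (mat_vec m M v) + vnorm m (mat_vec m (\<lambda>i j. M' i j - M i j) v)"
    by (simp add: vnorm_add_le)
  also have "\<dots> \<le> c * vnorm m v + r * vnorm m v"
  proof (rule add_mono)
    show "vnorm m (mat_vec m M v) \<le> c * vnorm m v"
      using assms(1) by (simp add: op_norm_le_def)
    show "vnorm m (mat_vec m (\<lambda>i j. M' i j - M i j) v) \<le> r * vnorm m v"
      using vnorm_mat_vec_le_frobenius mult_right_mono[OF assms(2) vnorm_nonneg] by (rule order_trans)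
  qed
  finally show "vnorm m (mat_vec m M' v) \<le> (c + r) * vnorm m v"
    by (simp add: algebra_simps)
qed

lemma op_norm_le_of_unit_ball:
  assumes "\<And>v. vnorm m v \<le> 1 \<Longrightarrow> vnorm m (mat_vec m M v) \<le> c"
  shows "op_norm_le m M c"
  unfolding op_norm_le_def
proof
  fix v
  show "vnorm m (mat_vec m M v) \<le> c * vnorm m v"
  proof (cases "vnorm m v = 0")
    case True
    then show ?thesis using vnorm_mat_vec_le_frobenius[of m M v] vnorm_nonneg[of m "mat_vec m M v"] by simp
  next
    case False
    then have pos: "0 < vnorm m v" using vnorm_nonneg[of m v] by linarith
    define u where "u j = v j / vnorm m v" for j
    have "vnorm m u = 1"
      using vnorm_mult[of m "1 / vnorm m v" v] pos by (simp add: u_def[abs_def])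
    then have "vnorm m (mat_vec m M u) \<le> c" by (intro assms) simp
    moreover have "mat_vec m M v = (\<lambda>i. vnorm m v * mat_vec m M u i)"
      using pos by (simp add: u_def mat_vec_def sum_distrib_left fun_eq_iff)
    ultimately show ?thesis
      using pos by (simp add: vnorm_mult mult.commute mult_left_mono)
  qed
qed

section \<open>Gradients of the network as tangent propagation\<close>

definition admm_preact ::
  "nat \<Rightarrow> nat \<Rightarrow> (nat \<Rightarrow> nat \<Rightarrow> real) \<Rightarrow> (nat \<Rightarrow> nat \<Rightarrow> real) \<Rightarrow>
   (nat \<Rightarrow> real) \<Rightarrow> (nat \<Rightarrow> real) \<times> (nat \<Rightarrow> real) \<Rightarrow> nat \<Rightarrow> real" where
  "admm_preact n m W1l W2l y zu i = (1 / sqrt (real n)) * (\<Sum>j<n. W1l i j * y j)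
     + (1 / sqrt (real m)) * mat_vec m W2l (\<lambda>j. fst zu j - snd zu j) i"

lemma admm_layer_eq:
  "admm_layer lam n m W1l W2l y zu =
    ((\<lambda>i. sigma_act lam (admm_preact n m W1l W2l y zu i + snd zu i)),
     (\<lambda>i. snd zu i + admm_preact n m W1l W2l y zu i - sigma_act lam (admm_preact n m W1l W2l y zu i + snd zu i)))"
  by (simp add: admm_layer_def admm_preact_def mat_vec_def Let_def)

definition admm_tangent_layer ::
  "real \<Rightarrow> nat \<Rightarrow> nat \<Rightarrow> (nat \<Rightarrow> nat \<Rightarrow> real) \<Rightarrow> (nat \<Rightarrow> nat \<Rightarrow> real) \<Rightarrow> (nat \<Rightarrow> real) \<Rightarrow>
   (nat \<Rightarrow> real) \<times> (nat \<Rightarrow> real) \<Rightarrow> (nat \<Rightarrow> real) \<times> (nat \<Rightarrow> real) \<Rightarrow> (nat \<Rightarrow> real) \<times> (nat \<Rightarrow> real)" where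
  "admm_tangent_layer lam n m W1l W2l y zu d =
    (let dx = (\<lambda>i. (1 / sqrt (real m)) * mat_vec m W2l (\<lambda>j. fst d j - snd d j) i);
         dz = (\<lambda>i. sigma_act_deriv lam (admm_preact n m W1l W2l y zu i + snd zu i) * (dx i + snd d i))
     in (dz, \<lambda>i. snd d i + dx i - dz i))"

fun admm_tangent_run ::
  "real \<Rightarrow> nat \<Rightarrow> nat \<Rightarrow> (nat \<Rightarrow> nat \<Rightarrow> nat \<Rightarrow> real) \<Rightarrow> (nat \<Rightarrow> nat \<Rightarrow> nat \<Rightarrow> real) \<Rightarrow>
   (nat \<Rightarrow> real) \<Rightarrow> nat \<Rightarrow> nat \<Rightarrow> (nat \<Rightarrow> real) \<times> (nat \<Rightarrow> real) \<Rightarrow>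
   (nat \<Rightarrow> real) \<times> (nat \<Rightarrow> real) \<Rightarrow> (nat \<Rightarrow> real) \<times> (nat \<Rightarrow> real)" where
  "admm_tangent_run lam n m W1 W2 y a 0 zu d = d"
| "admm_tangent_run lam n m W1 W2 y a (Suc k) zu d =
     admm_tangent_layer lam n m (W1 (a + Suc k)) (W2 (a + Suc k)) y (admm_run lam n m W1 W2 y a k zu)
        (admm_tangent_run lam n m W1 W2 y a k zu d)"

lemma admm_layer_has_real_derivative:
  assumes "\<And>i. ((\<lambda>t. fst (S t) i) has_real_derivative fst D i) (at t0)"
      and "\<And>i. ((\<lambda>t. snd (S t) i) has_real_derivative snd D i) (at t0)"
  shows "((\<lambda>t. fst (admm_layer lam n m W1l W2l y (S t)) i) has_real_derivative
            fst (admm_tangent_layer lam n m W1l W2l y (S t0) D) i) (at t0)"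
    and "((\<lambda>t. snd (admm_layer lam n m W1l W2l y (S t)) i) has_real_derivative
            snd (admm_tangent_layer lam n m W1l W2l y (S t0) D) i) (at t0)"
proof -
  define dx where "dx i = (1 / sqrt (real m)) * mat_vec m W2l (\<lambda>j. fst D j - snd D j) i" for i
  have pre: "((\<lambda>t. admm_preact n m W1l W2l y (S t) i + snd (S t) i) has_real_derivative dx i + snd D i) (at t0)"
    unfolding admm_preact_def dx_def mat_vec_def
    by (rule derivative_eq_intros refl assms | simp add: mult.commute)+
  have act: "((\<lambda>t. sigma_act lam (admm_preact n m W1l W2l y (S t) i + snd (S t) i)) has_real_derivative
     sigma_act_deriv lam (admm_preact n m W1l W2l y (S t0) i + snd (S t0) i) * (dx i + snd D i)) (at t0)"
    using DERIV_chain2[OF sigma_act_has_real_derivative pre] .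
  show "((\<lambda>t. fst (admm_layer lam n m W1l W2l y (S t)) i) has_real_derivative
            fst (admm_tangent_layer lam n m W1l W2l y (S t0) D) i) (at t0)"
    unfolding admm_layer_eq admm_tangent_layer_def Let_def dx_def[symmetric] using act by simp
  have "((\<lambda>t. snd (S t) i + admm_preact n m W1l W2l y (S t) i
           - sigma_act lam (admm_preact n m W1l W2l y (S t) i + snd (S t) i)) has_real_derivative
        snd D i + dx i - sigma_act_deriv lam (admm_preact n m W1l W2l y (S t0) i + snd (S t0) i) * (dx i + snd D i)) (at t0)"
    using DERIV_diff[OF pre act] by (simp add: algebra_simps)
  then show "((\<lambda>t. snd (admm_layer lam n m W1l W2l y (S t)) i) has_real_derivative
            snd (admm_tangent_layer lam n m W1l W2l y (S t0) D) i) (at t0)"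
    unfolding admm_layer_eq admm_tangent_layer_def Let_def dx_def[symmetric] by simp
qed

lemma admm_run_has_real_derivative:
  assumes "\<And>i. ((\<lambda>t. fst (S t) i) has_real_derivative fst D i) (at t0)"
      and "\<And>i. ((\<lambda>t. snd (S t) i) has_real_derivative snd D i) (at t0)"
  shows "((\<lambda>t. fst (admm_run lam n m W1 W2 y a k (S t)) i) has_real_derivative
            fst (admm_tangent_run lam n m W1 W2 y a k (S t0) D) i) (at t0) \<and>
         ((\<lambda>t. snd (admm_run lam n m W1 W2 y a k (S t)) i) has_real_derivative
            snd (admm_tangent_run lam n m W1 W2 y a k (S t0) D) i) (at t0)"
proof (induction k arbitrary: i)
  case 0
  then show ?case using assms by simp
next
  case (Suc k)
  then show ?case
    unfolding admm_run.simps admm_tangent_run.simps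
    by (intro conjI admm_layer_has_real_derivative[where S="\<lambda>t. admm_run lam n m W1 W2 y a k (S t)"]) auto
qed

lemma admm_b_eq_tangent:
  "admm_b lam n m L W1 W2 y z0 u0 s l j =
     fst (admm_tangent_run lam n m W1 W2 y l (L - l) (admm_state lam n m W1 W2 y z0 u0 l)
            (\<lambda>i. if i = j then 1 else 0, \<lambda>_. 0)) s / sqrt (real m)"
proof -
  define zu where "zu = admm_state lam n m W1 W2 y z0 u0 l"
  define S where "S t = ((fst zu)(j := t), snd zu)" for t
  define D :: "(nat \<Rightarrow> real) \<times> (nat \<Rightarrow> real)" where "D = (\<lambda>i. if i = j then 1 else 0, \<lambda>_. 0)"
  have "((\<lambda>t. fst (S t) i) has_real_derivative fst D i) (at (fst zu j))" for i
    unfolding S_def D_def by (cases "i = j") (auto intro!: derivative_eq_intros)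
  moreover have "((\<lambda>t. snd (S t) i) has_real_derivative snd D i) (at (fst zu j))" for i
    unfolding S_def D_def by (auto intro!: derivative_eq_intros)
  moreover have "S (fst zu j) = zu" unfolding S_def by simp
  ultimately have "((\<lambda>t. fst (admm_run lam n m W1 W2 y l (L - l) (S t)) s) has_real_derivative
            fst (admm_tangent_run lam n m W1 W2 y l (L - l) zu D) s) (at (fst zu j))"
    using admm_run_has_real_derivative[of S D "fst zu j" lam n m W1 W2 y l "L - l" s] by simp
  then have "((\<lambda>t. fst (admm_run lam n m W1 W2 y l (L - l) (S t)) s / sqrt (real m)) has_real_derivative
            fst (admm_tangent_run lam n m W1 W2 y l (L - l) zu D) s / sqrt (real m)) (at (fst zu j))"
    by (rule DERIV_cdivide)
  then show ?thesis
    unfolding admm_b_def Let_def zu_def[symmetric] S_def D_def by (rule DERIV_imp_deriv)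
qed

lemma admm_tangent_layer_sum:
  assumes "finite J"
  shows "admm_tangent_layer lam n m W1l W2l y zu (\<lambda>i. \<Sum>j\<in>J. c j * fst (E j) i, \<lambda>i. \<Sum>j\<in>J. c j * snd (E j) i) =
    (\<lambda>i. \<Sum>j\<in>J. c j * fst (admm_tangent_layer lam n m W1l W2l y zu (E j)) i,
     \<lambda>i. \<Sum>j\<in>J. c j * snd (admm_tangent_layer lam n m W1l W2l y zu (E j)) i)"
proof -
  define dx where "dx j i = (1 / sqrt (real m)) * mat_vec m W2l (\<lambda>k. fst (E j) k - snd (E j) k) i" for j i
  define g where "g i = sigma_act_deriv lam (admm_preact n m W1l W2l y zu i + snd zu i)" for i
  have "(1 / sqrt (real m)) * mat_vec m W2l (\<lambda>k. (\<Sum>j\<in>J. c j * fst (E j) k) - (\<Sum>j\<in>J. c j * snd (E j) k)) i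
     = (\<Sum>j\<in>J. c j * dx j i)" for i
  proof -
    have "mat_vec m W2l (\<lambda>k. (\<Sum>j\<in>J. c j * fst (E j) k) - (\<Sum>j\<in>J. c j * snd (E j) k)) i
        = (\<Sum>k<m. \<Sum>j\<in>J. c j * (W2l i k * (fst (E j) k - snd (E j) k)))"
      by (simp add: mat_vec_def sum_subtractf[symmetric] sum_distrib_left algebra_simps)
    also have "\<dots> = (\<Sum>j\<in>J. c j * mat_vec m W2l (\<lambda>k. fst (E j) k - snd (E j) k) i)"
      by (subst sum.swap) (simp add: mat_vec_def sum_distrib_left)
    finally show ?thesis by (simp add: dx_def sum_distrib_left algebra_simps)
  qed
  then show ?thesis
    unfolding admm_tangent_layer_def Let_def fst_conv snd_conv dx_def[symmetric] g_def[symmetric]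
    by (simp add: fun_eq_iff sum_distrib_left sum.distrib[symmetric] sum_subtractf[symmetric] algebra_simps)
qed

lemma admm_tangent_run_sum:
  assumes "finite J"
  shows "admm_tangent_run lam n m W1 W2 y a k zu (\<lambda>i. \<Sum>j\<in>J. c j * fst (E j) i, \<lambda>i. \<Sum>j\<in>J. c j * snd (E j) i) =
    (\<lambda>i. \<Sum>j\<in>J. c j * fst (admm_tangent_run lam n m W1 W2 y a k zu (E j)) i,
     \<lambda>i. \<Sum>j\<in>J. c j * snd (admm_tangent_run lam n m W1 W2 y a k zu (E j)) i)"
  by (induction k) (simp_all add: admm_tangent_layer_sum[OF assms])

definition pair_vnorm :: "nat \<Rightarrow> (nat \<Rightarrow> real) \<times> (nat \<Rightarrow> real) \<Rightarrow> real" where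
  "pair_vnorm m d = vnorm m (fst d) + vnorm m (snd d)"

lemma pair_vnorm_admm_tangent_layer_le:
  assumes "op_norm_le m W2l c" "0 \<le> c"
  shows "pair_vnorm m (admm_tangent_layer lam n m W1l W2l y zu d) \<le> 5 * (1 + c / sqrt (real m)) * pair_vnorm m d"
proof -
  define dx where "dx i = (1 / sqrt (real m)) * mat_vec m W2l (\<lambda>j. fst d j - snd d j) i" for i
  define dz where "dz i = sigma_act_deriv lam (admm_preact n m W1l W2l y zu i + snd zu i) * (dx i + snd d i)" for i
  have "vnorm m dx = (1 / sqrt (real m)) * vnorm m (mat_vec m W2l (\<lambda>j. fst d j - snd d j))"
    unfolding dx_def[abs_def] vnorm_mult by simp
  also have "\<dots> \<le> (1 / sqrt (real m)) * (c * (vnorm m (fst d) + vnorm m (snd d)))"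
    using assms vnorm_diff_le[of m "fst d" "snd d"] unfolding op_norm_le_def
    by (intro mult_left_mono) (auto intro: order_trans mult_left_mono)
  finally have dx_le: "vnorm m dx \<le> c / sqrt (real m) * pair_vnorm m d"
    by (simp add: pair_vnorm_def)
  have "vnorm m dz \<le> vnorm m (\<lambda>i. 2 * (dx i + snd d i))"
  proof (rule vnorm_mono_abs)
    fix i :: nat
    show "\<bar>dz i\<bar> \<le> \<bar>2 * (dx i + snd d i)\<bar>"
      unfolding dz_def abs_mult using sigma_act_deriv_nonneg sigma_act_deriv_le_2
      by (intro mult_right_mono) auto
  qed
  also have "\<dots> \<le> 2 * (vnorm m dx + vnorm m (snd d))"
    using vnorm_add_le[of m dx "snd d"] vnorm_mult[of m 2 "\<lambda>i. dx i + snd d i"] by simp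
  finally have dz_le: "vnorm m dz \<le> 2 * (vnorm m dx + vnorm m (snd d))" .
  have du_le: "vnorm m (\<lambda>i. snd d i + dx i - dz i) \<le> vnorm m (snd d) + vnorm m dx + vnorm m dz"
    using vnorm_diff_le[of m "\<lambda>i. snd d i + dx i" dz] vnorm_add_le[of m "snd d" dx] by linarith
  have "admm_tangent_layer lam n m W1l W2l y zu d = (dz, \<lambda>i. snd d i + dx i - dz i)"
    unfolding admm_tangent_layer_def Let_def dx_def dz_def by simp
  then have "pair_vnorm m (admm_tangent_layer lam n m W1l W2l y zu d) \<le> 5 * (vnorm m dx + vnorm m (snd d))"
    unfolding pair_vnorm_def using dz_le du_le by simp
  also have "\<dots> \<le> 5 * (c / sqrt (real m) * pair_vnorm m d + pair_vnorm m d)"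
    using dx_le vnorm_nonneg[of m "fst d"] unfolding pair_vnorm_def by simp
  finally show ?thesis by (simp add: algebra_simps)
qed

lemma pair_vnorm_admm_tangent_run_le:
  assumes "\<And>l. a < l \<Longrightarrow> l \<le> a + k \<Longrightarrow> op_norm_le m (W2 l) c" "0 \<le> c"
  shows "pair_vnorm m (admm_tangent_run lam n m W1 W2 y a k zu d) \<le> (5 * (1 + c / sqrt (real m))) ^ k * pair_vnorm m d"
  using assms(1)
proof (induction k)
  case 0
  then show ?case by simp
next
  case (Suc k)
  have "pair_vnorm m (admm_tangent_run lam n m W1 W2 y a (Suc k) zu d)
      \<le> 5 * (1 + c / sqrt (real m)) * pair_vnorm m (admm_tangent_run lam n m W1 W2 y a k zu d)"
    unfolding admm_tangent_run.simps by (rule pair_vnorm_admm_tangent_layer_le) (use Suc.prems assms(2) in auto)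
  also have "\<dots> \<le> 5 * (1 + c / sqrt (real m)) * ((5 * (1 + c / sqrt (real m))) ^ k * pair_vnorm m d)"
    using Suc assms(2) by (intro mult_left_mono) auto
  finally show ?case by (simp add: algebra_simps)
qed

text \<open>Since the tangent run \<open>T\<close> is linear and \<open>b\<^sub>j = (T e\<^sub>j)\<^sub>s / \<surd>m\<close>, applying \<open>T\<close> to \<open>b\<close> itself
  gives \<open>\<surd>m \<parallel>b\<parallel>\<^sup>2 = (T b)\<^sub>s \<le> \<parallel>T b\<parallel>\<close>; the growth bound on \<open>T\<close> then bounds \<open>\<parallel>b\<parallel>\<close>.\<close>

lemma vnorm_admm_b_le:
  assumes "\<And>l'. l < l' \<Longrightarrow> l' \<le> L \<Longrightarrow> op_norm_le m (W2 l') c" "0 \<le> c" "s < m"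
  shows "vnorm m (\<lambda>j. admm_b lam n m L W1 W2 y z0 u0 s l j) \<le> (5 * (1 + c / sqrt (real m))) ^ (L - l) / sqrt (real m)"
proof -
  define b where "b = (\<lambda>j. admm_b lam n m L W1 W2 y z0 u0 s l j)"
  define T where "T = admm_tangent_run lam n m W1 W2 y l (L - l) (admm_state lam n m W1 W2 y z0 u0 l)"
  define E :: "nat \<Rightarrow> (nat \<Rightarrow> real) \<times> (nat \<Rightarrow> real)" where "E j = (\<lambda>i. if i = j then 1 else 0, \<lambda>_. 0)" for j
  define G where "G = (5 * (1 + c / sqrt (real m))) ^ (L - l)"
  define v :: "(nat \<Rightarrow> real) \<times> (nat \<Rightarrow> real)" where "v = (\<lambda>i. if i < m then b i else 0, \<lambda>_. 0)"
  have sqrt_m: "0 < sqrt (real m)" using assms(3) by simp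
  have G_nonneg: "0 \<le> G" unfolding G_def using assms(2) by simp
  have "v = (\<lambda>i. \<Sum>j<m. b j * fst (E j) i, \<lambda>i. \<Sum>j<m. b j * snd (E j) i)"
    by (simp add: v_def E_def fun_eq_iff if_distrib[of "(*) _"] cong: if_cong)
  then have "T v = (\<lambda>i. \<Sum>j<m. b j * fst (T (E j)) i, \<lambda>i. \<Sum>j<m. b j * snd (T (E j)) i)"
    unfolding T_def by (simp only: admm_tangent_run_sum[OF finite_lessThan])
  then have "fst (T v) s = (\<Sum>j<m. b j * fst (T (E j)) s)"
    by simp
  also have "\<dots> = (\<Sum>j<m. sqrt (real m) * (b j)\<^sup>2)"
  proof (rule sum.cong)
    fix j
    have "fst (T (E j)) s = sqrt (real m) * b j"
      using sqrt_m by (simp add: b_def admm_b_eq_tangent T_def E_def)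
    then show "b j * fst (T (E j)) s = sqrt (real m) * (b j)\<^sup>2"
      by (simp add: power2_eq_square)
  qed simp
  also have "\<dots> = sqrt (real m) * (vnorm m b)\<^sup>2"
    by (simp add: power2_vnorm sum_distrib_left)
  finally have "sqrt (real m) * (vnorm m b)\<^sup>2 = fst (T v) s"
    by (rule sym)
  also have "\<dots> \<le> pair_vnorm m (T v)"
    using abs_le_vnorm[OF assms(3), of "fst (T v)"] vnorm_nonneg[of m "snd (T v)"] by (simp add: pair_vnorm_def)
  also have "\<dots> \<le> G * pair_vnorm m v"
    unfolding T_def G_def by (rule pair_vnorm_admm_tangent_run_le) (use assms in auto)
  also have "pair_vnorm m v = vnorm m b"
    unfolding pair_vnorm_def v_def by (simp, rule vnorm_cong) simp
  finally have "sqrt (real m) * (vnorm m b)\<^sup>2 \<le> G * vnorm m b" .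
  then have "sqrt (real m) * vnorm m b \<le> G"
    using vnorm_nonneg[of m b] G_nonneg by (cases "vnorm m b = 0") (simp_all add: power2_eq_square)
  then show ?thesis
    unfolding b_def[symmetric] G_def[symmetric] using sqrt_m by (simp add: field_simps)
qed

section \<open>Operator norms from a grid net\<close>

definition grid_net :: "nat \<Rightarrow> (nat \<Rightarrow> real) set" where
  "grid_net m = {p. (\<forall>j. m \<le> j \<longrightarrow> p j = 0) \<and>
     (\<forall>j<m. \<exists>a::int. \<bar>a\<bar> \<le> int (4 * m) \<and> p j = of_int a / real (4 * m)) \<and> vnorm m p \<le> 2}"

lemma grid_net_subset_image:
  "grid_net m \<subseteq> (\<lambda>a j. if j < m then of_int (a j) / real (4 * m) else 0) ` PiE {..<m} (\<lambda>_. {- int (4 * m)..int (4 * m)})"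
proof
  fix p assume p: "p \<in> grid_net m"
  define a where "a = restrict (\<lambda>j. \<lfloor>p j * real (4 * m)\<rfloor>) {..<m}"
  have a: "\<bar>a j\<bar> \<le> int (4 * m) \<and> of_int (a j) / real (4 * m) = p j" if "j < m" for j
  proof -
    obtain b :: int where b: "\<bar>b\<bar> \<le> int (4 * m)" "p j = of_int b / real (4 * m)"
      using p \<open>j < m\<close> unfolding grid_net_def by auto
    then have "a j = b" unfolding a_def using \<open>j < m\<close> by simp
    then show ?thesis using b that by simp
  qed
  moreover have "p j = 0" if "\<not> j < m" for j
    using p that unfolding grid_net_def by simp
  ultimately have "p = (\<lambda>j. if j < m then of_int (a j) / real (4 * m) else 0)"
    by auto
  moreover have "a \<in> PiE {..<m} (\<lambda>_. {- int (4 * m)..int (4 * m)})"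
  proof -
    have "a j \<in> {- int (4 * m)..int (4 * m)}" if "j < m" for j
      using a[OF that] by (auto simp: abs_le_iff)
    then show ?thesis by (auto simp: a_def PiE_iff)
  qed
  ultimately show "p \<in> (\<lambda>a j. if j < m then of_int (a j) / real (4 * m) else 0) ` PiE {..<m} (\<lambda>_. {- int (4 * m)..int (4 * m)})"
    by blast
qed

lemma finite_grid_net: "finite (grid_net m)"
  by (rule finite_subset[OF grid_net_subset_image]) (intro finite_imageI finite_PiE; simp)

lemma card_grid_net_le: "card (grid_net m) \<le> (8 * m + 1) ^ m"
proof -
  have "card (grid_net m) \<le> card (PiE {..<m} (\<lambda>_. {- int (4 * m)..int (4 * m)}))"
    by (rule order_trans[OF card_mono[OF _ grid_net_subset_image] card_image_le])
       (intro finite_imageI finite_PiE; simp)+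
  also have "\<dots> = (8 * m + 1) ^ m"
    by (simp add: card_PiE nat_add_distrib nat_mult_distrib)
  finally show ?thesis .
qed

lemma vnorm_grid_net_le: "p \<in> grid_net m \<Longrightarrow> vnorm m p \<le> 2"
  by (simp add: grid_net_def)

lemma grid_net_approx:
  assumes "0 < m" "vnorm m x \<le> 1"
  obtains p where "p \<in> grid_net m" "vnorm m (\<lambda>j. x j - p j) \<le> 1/4"
proof -
  define D where "D = real (4 * m)"
  have D_pos: "0 < D" using assms(1) unfolding D_def by simp
  define p where "p j = (if j < m then of_int \<lfloor>D * x j\<rfloor> / D else 0)" for j
  have "\<bar>x j - p j\<bar> \<le> \<bar>1 / D\<bar>" if "j < m" for j
  proof -
    have "x j - p j = (D * x j - of_int \<lfloor>D * x j\<rfloor>) / D"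
      using that D_pos by (simp add: p_def diff_divide_distrib)
    then have "\<bar>x j - p j\<bar> = \<bar>D * x j - of_int \<lfloor>D * x j\<rfloor>\<bar> / D"
      using D_pos by simp
    also have "\<dots> \<le> 1 / D"
      using D_pos by (intro divide_right_mono) linarith+
    finally show ?thesis using D_pos by simp
  qed
  then have "vnorm m (\<lambda>j. x j - p j) \<le> vnorm m (\<lambda>_. 1 / D)"
    by (rule vnorm_mono_abs)
  also have "\<dots> = sqrt (real m) / D" using D_pos by (simp add: vnorm_eq_L2_set L2_set_constant)
  also have "\<dots> \<le> 1/4"
    using D_pos real_sqrt_le_mono[of "real m" "(real m)\<^sup>2"] assms(1) by (simp add: D_def power2_eq_square)
  finally have close: "vnorm m (\<lambda>j. x j - p j) \<le> 1/4" .
  have "\<bar>\<lfloor>D * x j\<rfloor>\<bar> \<le> int (4 * m)" if "j < m" for j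
  proof -
    have "\<bar>D * x j\<bar> \<le> D"
      using abs_le_vnorm[OF that, of x] assms(2) D_pos by (simp add: abs_mult)
    then show ?thesis unfolding D_def by linarith
  qed
  moreover have "vnorm m p \<le> 2"
    using vnorm_diff_le[of m x "\<lambda>j. x j - p j"] close assms(2) by simp
  ultimately have "p \<in> grid_net m"
    unfolding grid_net_def by (auto simp: p_def D_def)
  then show ?thesis using close by (rule that)
qed

text \<open>The standard \<open>\<epsilon>\<close>-net argument: if \<open>S\<close> bounds \<open>\<parallel>M x\<parallel>\<close> on the unit ball, approximating both
  \<open>x\<close> and the direction of \<open>M x\<close> by net points improves the bound to \<open>t + 3/4 S\<close>.\<close>

lemma vnorm_mat_vec_le_grid_net_bound:
  assumes "0 < m" "0 \<le> t"
    and net: "\<And>p q. p \<in> grid_net m \<Longrightarrow> q \<in> grid_net m \<Longrightarrow> \<bar>vinner m q (mat_vec m M p)\<bar> \<le> t"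
    and ball: "\<And>x. vnorm m x \<le> 1 \<Longrightarrow> vnorm m (mat_vec m M x) \<le> S"
    and x: "vnorm m x \<le> 1"
  shows "vnorm m (mat_vec m M x) \<le> t + 3/4 * S"
proof -
  define v where "v = mat_vec m M x"
  have S_nonneg: "0 \<le> S"
    using ball[of "\<lambda>_. 0"] vnorm_nonneg[of m "mat_vec m M (\<lambda>_. 0)"] by simp
  have v_le: "vnorm m v \<le> S" unfolding v_def by (rule ball[OF x])
  show ?thesis
  proof (cases "vnorm m v = 0")
    case True
    then show ?thesis using assms(2) S_nonneg by (simp add: v_def)
  next
    case False
    then have v_pos: "0 < vnorm m v" using vnorm_nonneg[of m v] by linarith
    define u where "u i = v i / vnorm m v" for i
    have "vnorm m u = 1"
      using vnorm_mult[of m "1 / vnorm m v" v] v_pos by (simp add: u_def[abs_def])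
    then obtain q where q: "q \<in> grid_net m" "vnorm m (\<lambda>i. u i - q i) \<le> 1/4"
      using grid_net_approx[OF assms(1), of u] by auto
    obtain p where p: "p \<in> grid_net m" "vnorm m (\<lambda>j. x j - p j) \<le> 1/4"
      by (rule grid_net_approx[OF assms(1) x])
    have "vinner m u v = vinner m v v / vnorm m v"
      by (simp add: u_def vinner_def sum_divide_distrib)
    then have "vinner m u v = vnorm m v"
      using v_pos by (simp add: vinner_self power2_eq_square)
    also have "vinner m u v = vinner m q (mat_vec m M p) + vinner m q (mat_vec m M (\<lambda>j. x j - p j))
        + vinner m (\<lambda>i. u i - q i) v"
      by (simp add: v_def vinner_diff_left vinner_add_right[symmetric] mat_vec_add[symmetric])
    finally have split: "vnorm m v = \<dots>" ..
    have "vnorm m (mat_vec m M (\<lambda>j. 4 * (x j - p j))) \<le> S"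
      using p(2) vnorm_mult[of m 4 "\<lambda>j. x j - p j"] by (intro ball) simp
    moreover have "mat_vec m M (\<lambda>j. 4 * (x j - p j)) = (\<lambda>i. 4 * mat_vec m M (\<lambda>j. x j - p j) i)"
      by (rule ext, rule mat_vec_mult)
    ultimately have Mxp: "vnorm m (mat_vec m M (\<lambda>j. x j - p j)) \<le> 1/4 * S"
      using vnorm_mult[of m 4 "mat_vec m M (\<lambda>j. x j - p j)"] by simp
    have "vinner m q (mat_vec m M (\<lambda>j. x j - p j)) \<le> 2 * (1/4 * S)"
    proof -
      have "vinner m q (mat_vec m M (\<lambda>j. x j - p j)) \<le> vnorm m q * vnorm m (mat_vec m M (\<lambda>j. x j - p j))"
        using abs_vinner_le[of m q] by (rule abs_le_D1)
      also have "\<dots> \<le> 2 * (1/4 * S)"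
        by (rule mult_mono[OF vnorm_grid_net_le[OF q(1)] Mxp]) (simp_all add: vnorm_nonneg)
      finally show ?thesis .
    qed
    moreover have "vinner m (\<lambda>i. u i - q i) v \<le> 1/4 * S"
    proof -
      have "vinner m (\<lambda>i. u i - q i) v \<le> vnorm m (\<lambda>i. u i - q i) * vnorm m v"
        using abs_vinner_le[of m "\<lambda>i. u i - q i"] by (rule abs_le_D1)
      also have "\<dots> \<le> 1/4 * S"
        by (rule mult_mono[OF q(2) v_le]) (simp_all add: vnorm_nonneg)
      finally show ?thesis .
    qed
    moreover have "vinner m q (mat_vec m M p) \<le> t"
      using net[OF p(1) q(1)] by simp
    ultimately show ?thesis
      using split unfolding v_def by linarith
  qed
qed

lemma op_norm_le_of_grid_net:
  assumes "0 < m" "0 \<le> t"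
    and "\<And>p q. p \<in> grid_net m \<Longrightarrow> q \<in> grid_net m \<Longrightarrow> \<bar>vinner m q (mat_vec m M p)\<bar> \<le> t"
  shows "op_norm_le m M (4 * t)"
proof (rule op_norm_le_of_unit_ball)
  define U where "U = (\<lambda>x. vnorm m (mat_vec m M x)) ` {x. vnorm m x \<le> 1}"
  have "vnorm m (mat_vec m M x) \<le> sqrt (\<Sum>i<m. \<Sum>j<m. (M i j)\<^sup>2)" if "vnorm m x \<le> 1" for x
    using vnorm_mat_vec_le_frobenius[of m M x] mult_left_le[OF that, of "sqrt (\<Sum>i<m. \<Sum>j<m. (M i j)\<^sup>2)"]
    by (simp add: sum_nonneg)
  then have "bdd_above U"
    unfolding U_def by (intro bdd_aboveI) auto
  then have ball: "vnorm m (mat_vec m M x) \<le> Sup U" if "vnorm m x \<le> 1" for x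
    using that by (intro cSup_upper) (auto simp: U_def)
  have "U \<noteq> {}" unfolding U_def by (auto intro!: exI[of _ "\<lambda>_. 0"])
  then have "Sup U \<le> t + 3/4 * Sup U"
    unfolding U_def using vnorm_mat_vec_le_grid_net_bound[OF assms ball]
    by (intro cSup_least) (auto simp: U_def)
  then show "vnorm m (mat_vec m M x) \<le> 4 * t" if "vnorm m x \<le> 1" for x
    using ball[OF that] by linarith
qed

section \<open>Tails of Gaussian linear combinations\<close>

lemma fact_double_div_le: "fact (2 * k) / (2 ^ k * fact k) \<le> (2 * real k) ^ k"
proof (induction k)
  case 0
  then show ?case by simp
next
  case (Suc k)
  have "fact (2 * Suc k) / (2 ^ Suc k * fact (Suc k) :: real)
      = ((2 * real k + 2) * ((2 * real k + 1) * fact (2 * k))) / ((2 * real k + 2) * (2 ^ k * fact k))"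
    by (simp add: algebra_simps)
  also have "\<dots> = (2 * real k + 1) * (fact (2 * k) / (2 ^ k * fact k))"
    by simp
  also have "\<dots> \<le> (2 * real k + 2) * (2 * real k + 2) ^ k"
  proof (rule mult_mono)
    show "fact (2 * k) / (2 ^ k * fact k) \<le> (2 * real k + 2) ^ k"
      using Suc.IH by (rule order_trans) (intro power_mono; simp)
  qed (auto simp: zero_le_divide_iff)
  finally show ?case by (simp add: algebra_simps)
qed

text \<open>Markov's inequality for \<open>Z\<^sup>2\<^sup>k\<close>, whose expectation is \<open>\<sigma>\<^sup>2\<^sup>k (2k)! / (2\<^sup>k k!)\<close>.\<close>

lemma (in prob_space) normal_tail_le_moment:
  assumes Z: "distributed M lborel Z (normal_density 0 \<sigma>)" and "0 < \<sigma>" "0 < t"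
  shows "prob {\<omega>\<in>space M. t \<le> \<bar>Z \<omega>\<bar>} \<le> (\<sigma>\<^sup>2) ^ k * (fact (2 * k) / (2 ^ k * fact k)) / t ^ (2 * k)"
proof -
  have moment: "has_bochner_integral lborel (\<lambda>x. normal_density 0 \<sigma> x * x ^ (2 * k))
      (fact (2 * k) / ((2 / \<sigma>\<^sup>2) ^ k * fact k))"
    using normal_moment_even[where \<mu>=0 and \<sigma>=\<sigma> and k=k] \<open>0 < \<sigma>\<close> by simp
  have int: "integrable M (\<lambda>\<omega>. Z \<omega> ^ (2 * k))"
    using distributed_integrable[OF Z, of "\<lambda>x. x ^ (2 * k)"] moment
    by (simp add: has_bochner_integral_iff)
  have expect: "expectation (\<lambda>\<omega>. Z \<omega> ^ (2 * k)) = fact (2 * k) / ((2 / \<sigma>\<^sup>2) ^ k * fact k)"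
    using distributed_integral[OF Z, of "\<lambda>x. x ^ (2 * k)"] moment
    by (simp add: has_bochner_integral_iff)
  have [measurable]: "Z \<in> borel_measurable M"
    using distributed_measurable[OF Z] by simp
  have "prob {\<omega>\<in>space M. t \<le> \<bar>Z \<omega>\<bar>} \<le> prob {\<omega>\<in>space M. t ^ (2 * k) \<le> Z \<omega> ^ (2 * k)}"
  proof (rule finite_measure_mono)
    have "t ^ (2 * k) \<le> Z \<omega> ^ (2 * k)" if "t \<le> \<bar>Z \<omega>\<bar>" for \<omega>
      using power_mono[OF that, of "2 * k"] \<open>0 < t\<close> by (simp add: power_even_abs)
    then show "{\<omega>\<in>space M. t \<le> \<bar>Z \<omega>\<bar>} \<subseteq> {\<omega>\<in>space M. t ^ (2 * k) \<le> Z \<omega> ^ (2 * k)}"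
      by auto
  qed measurable
  also have "\<dots> \<le> expectation (\<lambda>\<omega>. Z \<omega> ^ (2 * k)) / t ^ (2 * k)"
    by (rule integral_Markov_inequality_measure[OF int, of "space M"])
       (use \<open>0 < t\<close> in \<open>auto simp: power_even_eq\<close>)
  also have "\<dots> = (\<sigma>\<^sup>2) ^ k * (fact (2 * k) / (2 ^ k * fact k)) / t ^ (2 * k)"
    unfolding expect using \<open>0 < \<sigma>\<close> by (simp add: field_simps)
  finally show ?thesis .
qed

lemma (in prob_space) std_normal_lincomb_tail:
  assumes "finite J" and indep: "indep_vars (\<lambda>_. borel) X J"
    and std: "\<And>i. i \<in> J \<Longrightarrow> distributed M lborel (X i) std_normal_density"
    and "0 < t"
  shows "prob {\<omega>\<in>space M. t \<le> \<bar>\<Sum>i\<in>J. c i * X i \<omega>\<bar>}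
          \<le> (\<Sum>i\<in>J. (c i)\<^sup>2) ^ k * (fact (2 * k) / (2 ^ k * fact k)) / t ^ (2 * k)"
proof -
  define J' where "J' = {i\<in>J. c i \<noteq> 0}"
  have "finite J'" using \<open>finite J\<close> unfolding J'_def by simp
  have sum_J': "(\<Sum>i\<in>J. c i * X i \<omega>) = (\<Sum>i\<in>J'. c i * X i \<omega>)" for \<omega>
    unfolding J'_def using \<open>finite J\<close> by (intro sum.mono_neutral_right) auto
  have sum_sq_J': "(\<Sum>i\<in>J. (c i)\<^sup>2) = (\<Sum>i\<in>J'. (c i)\<^sup>2)"
    unfolding J'_def using \<open>finite J\<close> by (intro sum.mono_neutral_right) auto
  show ?thesis
  proof (cases "J' = {}")
    case True
    then show ?thesis using \<open>0 < t\<close> by (simp add: sum_J' sum_nonneg)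
  next
    case False
    define \<sigma> where "\<sigma> = sqrt (\<Sum>i\<in>J'. (\<bar>c i\<bar>)\<^sup>2)"
    have "0 < \<sigma>" unfolding \<sigma>_def using False \<open>finite J'\<close>
      by (intro real_sqrt_gt_zero sum_pos) (auto simp: J'_def)
    have "indep_vars (\<lambda>_. borel) (\<lambda>i \<omega>. c i * X i \<omega>) J'"
      by (rule indep_vars_compose2[where X=X and Y="\<lambda>i x. c i * x"])
         (auto intro: indep_vars_subset[OF indep] simp: J'_def)
    moreover have "distributed M lborel (\<lambda>\<omega>. c i * X i \<omega>) (normal_density 0 \<bar>c i\<bar>)" if "i \<in> J'" for i
      using normal_density_affine[of "X i" 0 1 "c i" 0] std that by (simp add: J'_def)
    ultimately have "distributed M lborel (\<lambda>\<omega>. \<Sum>i\<in>J'. c i * X i \<omega>) (normal_density 0 \<sigma>)"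
      using sum_indep_normal[OF \<open>finite J'\<close> False, where X="\<lambda>i \<omega>. c i * X i \<omega>" and \<mu>="\<lambda>_. 0" and \<sigma>="\<lambda>i. \<bar>c i\<bar>"]
      by (simp add: \<sigma>_def J'_def)
    then have "prob {\<omega>\<in>space M. t \<le> \<bar>\<Sum>i\<in>J'. c i * X i \<omega>\<bar>}
        \<le> (\<sigma>\<^sup>2) ^ k * (fact (2 * k) / (2 ^ k * fact k)) / t ^ (2 * k)"
      using normal_tail_le_moment \<open>0 < \<sigma>\<close> \<open>0 < t\<close> by blast
    moreover have "\<sigma>\<^sup>2 = (\<Sum>i\<in>J. (c i)\<^sup>2)"
      unfolding \<sigma>_def sum_sq_J' by (simp add: sum_nonneg)
    ultimately show ?thesis by (simp add: sum_J')
  qed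
qed

lemma prob_space_std_normal_distribution: "prob_space std_normal_distribution"
  using real_dist_normal_dist by (simp add: real_distribution_def)

lemma prob_space_gauss_init: "prob_space (gauss_init L n m)"
  unfolding gauss_init_def by (rule prob_space_PiM) (rule prob_space_std_normal_distribution)

lemma measurable_gauss_init_coord:
  assumes "i \<in> init_index L n m"
  shows "(\<lambda>\<omega>. \<omega> i) \<in> borel_measurable (gauss_init L n m)"
proof -
  have "(\<lambda>\<omega>. \<omega> i) \<in> measurable (gauss_init L n m) std_normal_distribution"
    unfolding gauss_init_def by (rule measurable_component_singleton[OF assms])
  then show ?thesis unfolding measurable_cong_sets[OF refl sets_density] measurable_lborel1 .
qed

lemma distr_gauss_init_coord:
  assumes "i \<in> init_index L n m" "sets N = sets borel"
  shows "distr (gauss_init L n m) N (\<lambda>\<omega>. \<omega> i) = std_normal_distribution"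
proof -
  have "distr (gauss_init L n m) N (\<lambda>\<omega>. \<omega> i) = distr (gauss_init L n m) std_normal_distribution (\<lambda>\<omega>. \<omega> i)"
    by (rule distr_cong) (simp_all only: assms(2) sets_density sets_lborel)
  also have "\<dots> = std_normal_distribution"
    unfolding gauss_init_def by (rule distr_PiM_component[OF prob_space_std_normal_distribution assms(1)])
  finally show ?thesis .
qed

lemma distributed_gauss_init_coord:
  assumes "i \<in> init_index L n m"
  shows "distributed (gauss_init L n m) lborel (\<lambda>\<omega>. \<omega> i) std_normal_density"
  unfolding distributed_def
proof (intro conjI)
  show "distr (gauss_init L n m) lborel (\<lambda>\<omega>. \<omega> i) = std_normal_distribution"
    using assms by (rule distr_gauss_init_coord) simp
  show "(\<lambda>\<omega>. \<omega> i) \<in> measurable (gauss_init L n m) lborel"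
    using measurable_gauss_init_coord[OF assms] by simp
qed simp

lemma indep_vars_gauss_init_coords:
  assumes "init_index L n m \<noteq> {}"
  shows "prob_space.indep_vars (gauss_init L n m) (\<lambda>_. borel) (\<lambda>i \<omega>. \<omega> i) (init_index L n m)"
proof -
  interpret prob_space "gauss_init L n m" by (rule prob_space_gauss_init)
  let ?I = "init_index L n m"
  have "distr (gauss_init L n m) (\<Pi>\<^sub>M i\<in>?I. borel) (\<lambda>\<omega>. \<lambda>i\<in>?I. \<omega> i) = distr (gauss_init L n m) (gauss_init L n m) (\<lambda>\<omega>. \<omega>)"
  proof (rule distr_cong)
    show "sets (\<Pi>\<^sub>M i\<in>?I. borel) = sets (gauss_init L n m)"
      unfolding gauss_init_def by (rule sets_PiM_cong) (simp_all only: sets_density sets_lborel)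
    show "restrict \<omega> ?I = \<omega>" if "\<omega> \<in> space (gauss_init L n m)" for \<omega>
      using that unfolding gauss_init_def space_PiM by (simp add: PiE_def extensional_restrict)
  qed simp
  also have "\<dots> = gauss_init L n m" by simp
  also have "\<dots> = (\<Pi>\<^sub>M i\<in>?I. distr (gauss_init L n m) borel (\<lambda>\<omega>. \<omega> i))"
    using distr_gauss_init_coord[of _ L n m borel] unfolding gauss_init_def
    by (intro PiM_cong) simp_all
  finally have "distr (gauss_init L n m) (\<Pi>\<^sub>M i\<in>?I. borel) (\<lambda>\<omega>. \<lambda>i\<in>?I. \<omega> i)
      = (\<Pi>\<^sub>M i\<in>?I. distr (gauss_init L n m) borel (\<lambda>\<omega>. \<omega> i))" .
  moreover have "random_variable borel (\<lambda>\<omega>. \<omega> i)" if "i \<in> ?I" for i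
    using that by (rule measurable_gauss_init_coord)
  ultimately show ?thesis
    using indep_vars_iff_distr_eq_PiM'[where I="?I" and M'="\<lambda>_. borel" and X="\<lambda>i \<omega>. \<omega> i", OF assms] by blast
qed

definition W2_index :: "nat \<Rightarrow> nat \<Rightarrow> (nat \<times> nat \<times> nat \<times> nat) set" where
  "W2_index m l = (\<lambda>(i, j). (2, l, i, j)) ` ({..<m} \<times> {..<m})"

lemma W2_index_subset: "l \<in> {1..L} \<Longrightarrow> W2_index m l \<subseteq> init_index L n m"
  unfolding W2_index_def init_index_def by auto

lemma inj_on_W2_index: "inj_on (\<lambda>(i, j). (2::nat, l, i, j)) ({..<m} \<times> {..<m})"
  by (auto simp: inj_on_def)

lemma vinner_mat_vec_W20_of:
  "vinner m q (mat_vec m (W20_of \<omega> l) p) = (\<Sum>\<iota>\<in>W2_index m l. (case \<iota> of (_, _, i, j) \<Rightarrow> q i * p j) * \<omega> \<iota>)"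
proof -
  have "vinner m q (mat_vec m (W20_of \<omega> l) p) = (\<Sum>i<m. \<Sum>j<m. q i * p j * \<omega> (2, l, i, j))"
    unfolding vinner_def mat_vec_def W20_of_def by (simp add: sum_distrib_left algebra_simps)
  also have "\<dots> = (\<Sum>(i, j)\<in>{..<m} \<times> {..<m}. q i * p j * \<omega> (2, l, i, j))"
    by (rule sum.cartesian_product)
  also have "\<dots> = (\<Sum>\<iota>\<in>W2_index m l. (case \<iota> of (_, _, i, j) \<Rightarrow> q i * p j) * \<omega> \<iota>)"
    unfolding W2_index_def by (rule sum.reindex_cong[OF inj_on_W2_index refl, symmetric]) auto
  finally show ?thesis .
qed

lemma measurable_vinner_mat_vec_W20_of:
  assumes "l \<in> {1..L}"
  shows "(\<lambda>\<omega>. vinner m q (mat_vec m (W20_of \<omega> l) p)) \<in> borel_measurable (gauss_init L n m)"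
  unfolding vinner_mat_vec_W20_of
proof (rule borel_measurable_sum)
  fix \<iota> assume "\<iota> \<in> W2_index m l"
  then have "(\<lambda>\<omega>. \<omega> \<iota>) \<in> borel_measurable (gauss_init L n m)"
    using W2_index_subset[OF assms] by (intro measurable_gauss_init_coord) blast
  then show "(\<lambda>\<omega>. (case \<iota> of (_, _, i, j) \<Rightarrow> q i * p j) * \<omega> \<iota>) \<in> borel_measurable (gauss_init L n m)"
    by (rule borel_measurable_times[OF borel_measurable_const])
qed

lemma W20_bilinear_tail:
  assumes "0 < m" "l \<in> {1..L}" "vnorm m p \<le> 2" "vnorm m q \<le> 2" "0 < t"
  shows "measure (gauss_init L n m) {\<omega>\<in>space (gauss_init L n m). t \<le> \<bar>vinner m q (mat_vec m (W20_of \<omega> l) p)\<bar>}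
     \<le> (32 * real k) ^ k / t ^ (2 * k)"
proof -
  interpret prob_space "gauss_init L n m" by (rule prob_space_gauss_init)
  define c where "c \<iota> = (case \<iota> of (_, _, i, j) \<Rightarrow> q i * p j)" for \<iota> :: "nat \<times> nat \<times> nat \<times> nat"
  have J: "W2_index m l \<subseteq> init_index L n m" by (rule W2_index_subset[OF assms(2)])
  have "(2, l, 0, 0) \<in> W2_index m l"
    unfolding W2_index_def using \<open>0 < m\<close> by (intro image_eqI[of _ _ "(0, 0)"]) auto
  then have "init_index L n m \<noteq> {}" using J by blast
  then have indep: "indep_vars (\<lambda>_. borel) (\<lambda>i \<omega>. \<omega> i) (W2_index m l)"
    using indep_vars_subset[OF indep_vars_gauss_init_coords J] by blast
  have "(\<Sum>\<iota>\<in>W2_index m l. (c \<iota>)\<^sup>2) = (\<Sum>(i, j)\<in>{..<m} \<times> {..<m}. (q i)\<^sup>2 * (p j)\<^sup>2)"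
    unfolding W2_index_def
  proof (rule sum.reindex_cong[OF inj_on_W2_index refl])
    fix x :: "nat \<times> nat"
    obtain i j where "x = (i, j)" by fastforce
    then show "(c ((\<lambda>(i, j). (2, l, i, j)) x))\<^sup>2 = (case x of (i, j) \<Rightarrow> (q i)\<^sup>2 * (p j)\<^sup>2)"
      by (simp add: c_def power_mult_distrib)
  qed
  also have "\<dots> = (\<Sum>i<m. \<Sum>j<m. (q i)\<^sup>2 * (p j)\<^sup>2)"
    by (rule sum.cartesian_product[symmetric])
  also have "\<dots> = (vnorm m q)\<^sup>2 * (vnorm m p)\<^sup>2"
    unfolding power2_vnorm sum_product ..
  also have "\<dots> \<le> 2\<^sup>2 * 2\<^sup>2"
    using assms(3,4) vnorm_nonneg[of m p] vnorm_nonneg[of m q] by (intro mult_mono power_mono) auto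
  finally have c_le: "(\<Sum>\<iota>\<in>W2_index m l. (c \<iota>)\<^sup>2) \<le> 16" by simp
  have "prob {\<omega>\<in>space (gauss_init L n m). t \<le> \<bar>vinner m q (mat_vec m (W20_of \<omega> l) p)\<bar>}
      \<le> (\<Sum>\<iota>\<in>W2_index m l. (c \<iota>)\<^sup>2) ^ k * (fact (2 * k) / (2 ^ k * fact k)) / t ^ (2 * k)"
    unfolding vinner_mat_vec_W20_of c_def[symmetric]
  proof (rule std_normal_lincomb_tail[OF _ indep _ \<open>0 < t\<close>])
    show "finite (W2_index m l)" by (simp add: W2_index_def)
    show "distributed (gauss_init L n m) lborel (\<lambda>\<omega>. \<omega> \<iota>) std_normal_density" if "\<iota> \<in> W2_index m l" for \<iota>
      using J that by (intro distributed_gauss_init_coord) blast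
  qed
  also have "\<dots> \<le> 16 ^ k * (2 * real k) ^ k / t ^ (2 * k)"
  proof (rule divide_right_mono)
    show "(\<Sum>\<iota>\<in>W2_index m l. (c \<iota>)\<^sup>2) ^ k * (fact (2 * k) / (2 ^ k * fact k)) \<le> 16 ^ k * (2 * real k) ^ k"
      using c_le by (intro mult_mono power_mono fact_double_div_le) (simp_all add: sum_nonneg)
  qed (use \<open>0 < t\<close> in simp)
  also have "16 ^ k * (2 * real k) ^ k = (32 * real k) ^ k"
    unfolding power_mult_distrib[symmetric] by simp
  finally show ?thesis .
qed

section \<open>The good event\<close>

text \<open>The parameters of the union bound: with the moment order \<open>k = m \<cdot> log_factor m\<close> and the
  threshold \<open>\<surd>(128 k)\<close>, the moment bound \<open>(32 k)\<^sup>k / \<surd>(128 k)\<^sup>2\<^sup>k\<close> is \<open>4\<^sup>-\<^sup>k\<close>, which beats the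
  \<open>(8m + 1)\<^sup>2\<^sup>m\<close> pairs of net points by a factor \<open>2\<^sup>-\<^sup>m\<close>.\<close>

definition log_factor :: "nat \<Rightarrow> nat" where
  "log_factor m = nat \<lceil>ln (2 * (8 * real m + 1)\<^sup>2)\<rceil>"

definition net_threshold :: "nat \<Rightarrow> real" where
  "net_threshold m = sqrt (128 * real (m * log_factor m))"

definition good_event :: "nat \<Rightarrow> nat \<Rightarrow> nat \<Rightarrow> (nat \<times> nat \<times> nat \<times> nat \<Rightarrow> real) set" where
  "good_event L n m = {\<omega>\<in>space (gauss_init L n m). \<forall>l\<in>{1..L}. \<forall>p\<in>grid_net m. \<forall>q\<in>grid_net m.
      \<bar>vinner m q (mat_vec m (W20_of \<omega> l) p)\<bar> < net_threshold m}"

lemma ln_log_factor_arg_pos: "0 < ln (2 * (8 * real m + 1)\<^sup>2)"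
proof -
  have "1 \<le> (8 * real m + 1)\<^sup>2" by (rule one_le_power) simp
  then show ?thesis by (intro ln_gt_zero) linarith
qed

lemma real_log_factor: "real (log_factor m) = of_int \<lceil>ln (2 * (8 * real m + 1)\<^sup>2)\<rceil>"
  using ln_log_factor_arg_pos[of m] unfolding log_factor_def by simp

lemma log_factor_ge_1: "1 \<le> log_factor m"
  using ln_log_factor_arg_pos[of m] unfolding log_factor_def by linarith

lemma four_pow_log_factor_ge: "2 * (8 * real m + 1)\<^sup>2 \<le> 4 ^ log_factor m"
proof -
  have "2 * (8 * real m + 1)\<^sup>2 = exp (ln (2 * (8 * real m + 1)\<^sup>2))"
    by (simp add: add_pos_nonneg)
  also have "\<dots> \<le> exp (real (log_factor m))"
    unfolding real_log_factor exp_le_cancel_iff by (rule le_of_int_ceiling)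
  also have "\<dots> = exp 1 ^ log_factor m" by (simp add: exp_of_nat_mult[symmetric])
  also have "\<dots> \<le> 4 ^ log_factor m" using exp_le by (intro power_mono) auto
  finally show ?thesis .
qed

lemma log_factor_le:
  assumes "1 \<le> m"
  shows "real (log_factor m) \<le> 18 * (1 + ln (real m))"
proof -
  have m: "1 \<le> real m" using assms by simp
  have "real (log_factor m) \<le> ln (2 * (8 * real m + 1)\<^sup>2) + 1"
    unfolding real_log_factor by linarith
  also have "ln (2 * (8 * real m + 1)\<^sup>2) = ln 2 + 2 * ln (8 * real m + 1)"
    by (simp add: ln_mult ln_realpow add_pos_nonneg)
  also have "ln (8 * real m + 1) \<le> ln (9 * real m)"
    using m by simp
  also have "ln (9 * real m) = ln 9 + ln (real m)"
    using m by (simp add: ln_mult)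
  also have "ln (2::real) \<le> 1" using ln_le_minus_one[of 2] by simp
  also have "ln (9::real) \<le> 8" using ln_le_minus_one[of 9] by simp
  finally have "real (log_factor m) \<le> 18 + 2 * ln (real m)" by simp
  then show ?thesis using ln_ge_zero[OF m] by simp
qed

lemma net_pair_tail_le:
  assumes "1 \<le> m" "l \<in> {1..L}" "p \<in> grid_net m" "q \<in> grid_net m"
  shows "measure (gauss_init L n m) {\<omega>\<in>space (gauss_init L n m). net_threshold m \<le> \<bar>vinner m q (mat_vec m (W20_of \<omega> l) p)\<bar>}
    \<le> 1 / 4 ^ (m * log_factor m)"
proof -
  define k where "k = m * log_factor m"
  have "1 \<le> k" unfolding k_def using assms(1) log_factor_ge_1[of m] by simp
  then have "0 < net_threshold m" unfolding net_threshold_def k_def[symmetric] by simp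
  then have "measure (gauss_init L n m) {\<omega>\<in>space (gauss_init L n m). net_threshold m \<le> \<bar>vinner m q (mat_vec m (W20_of \<omega> l) p)\<bar>}
      \<le> (32 * real k) ^ k / net_threshold m ^ (2 * k)"
    using assms vnorm_grid_net_le by (intro W20_bilinear_tail) auto
  also have "net_threshold m ^ (2 * k) = (128 * real k) ^ k"
    unfolding net_threshold_def k_def[symmetric] by (simp add: power_mult)
  also have "(32 * real k) ^ k / (128 * real k) ^ k = 1 / 4 ^ k"
    using \<open>1 \<le> k\<close> by (simp add: power_divide[symmetric] power_one_over)
  finally show ?thesis unfolding k_def .
qed

lemma card_grid_net_pairs_le: "2 ^ m * real (card (grid_net m)) ^ 2 \<le> 4 ^ (m * log_factor m)"
proof -
  have "2 ^ m * real (card (grid_net m)) ^ 2 \<le> 2 ^ m * ((8 * real m + 1) ^ m) ^ 2"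
  proof (intro mult_left_mono power_mono)
    have "real (card (grid_net m)) \<le> real ((8 * m + 1) ^ m)"
      using card_grid_net_le[of m] by (simp only: of_nat_le_iff)
    then show "real (card (grid_net m)) \<le> (8 * real m + 1) ^ m" by (simp add: add.commute)
  qed simp_all
  also have "\<dots> = (2 * (8 * real m + 1)\<^sup>2) ^ m"
    by (simp add: power_mult_distrib power_mult[symmetric] mult.commute)
  also have "\<dots> \<le> (4 ^ log_factor m) ^ m"
    by (intro power_mono four_pow_log_factor_ge) simp
  also have "\<dots> = 4 ^ (m * log_factor m)"
    by (simp add: power_mult[symmetric] mult.commute)
  finally show ?thesis .
qed

lemma good_event_eq:
  "good_event L n m = space (gauss_init L n m) -
     (\<Union>(l, p, q)\<in>{1..L} \<times> grid_net m \<times> grid_net m.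
        {\<omega>\<in>space (gauss_init L n m). net_threshold m \<le> \<bar>vinner m q (mat_vec m (W20_of \<omega> l) p)\<bar>})"
  unfolding good_event_def by (force simp: not_le)

lemma good_event_in_sets: "good_event L n m \<in> sets (gauss_init L n m)"
proof -
  have "{\<omega>\<in>space (gauss_init L n m). net_threshold m \<le> \<bar>vinner m q (mat_vec m (W20_of \<omega> l) p)\<bar>}
      \<in> sets (gauss_init L n m)" if "l \<in> {1..L}" for l p q
    using measurable_vinner_mat_vec_W20_of[OF that, of m q p n] by measurable
  then show ?thesis
    unfolding good_event_eq using finite_grid_net by (intro sets.compl_sets sets.finite_UN) auto
qed

lemma prob_good_event_ge:
  assumes "1 \<le> m"
  shows "1 - real L / 2 ^ m \<le> measure (gauss_init L n m) (good_event L n m)"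
proof -
  interpret prob_space "gauss_init L n m" by (rule prob_space_gauss_init)
  define T where "T = {1..L} \<times> grid_net m \<times> grid_net m"
  define B where "B = (\<lambda>(l, p, q). {\<omega>\<in>space (gauss_init L n m). net_threshold m \<le> \<bar>vinner m q (mat_vec m (W20_of \<omega> l) p)\<bar>})"
  have "finite T" unfolding T_def using finite_grid_net by simp
  have B: "B x \<in> sets (gauss_init L n m)" if "x \<in> T" for x
    using that measurable_vinner_mat_vec_W20_of unfolding T_def B_def by auto
  have "prob (\<Union>x\<in>T. B x) \<le> (\<Sum>x\<in>T. prob (B x))"
    by (rule measure_UNION_le[OF \<open>finite T\<close> B])
  also have "\<dots> \<le> (\<Sum>x\<in>T. 1 / 4 ^ (m * log_factor m))"
    using net_pair_tail_le[OF assms] unfolding T_def B_def by (intro sum_mono) auto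
  also have "\<dots> = real L * real (card (grid_net m)) ^ 2 / 4 ^ (m * log_factor m)"
    unfolding T_def by (simp add: card_cartesian_product power2_eq_square)
  also have "\<dots> \<le> real L / 2 ^ m"
    using card_grid_net_pairs_le[of m] by (simp add: field_simps mult_left_mono)
  finally have "prob (\<Union>x\<in>T. B x) \<le> real L / 2 ^ m" .
  moreover have "good_event L n m = space (gauss_init L n m) - (\<Union>x\<in>T. B x)"
    unfolding good_event_eq T_def B_def by (simp add: case_prod_beta)
  ultimately show ?thesis
    using prob_compl[OF sets.finite_UN[OF \<open>finite T\<close> B]] by simp
qed

section \<open>Gradient bounds on the good event\<close>

lemma net_threshold_nonneg: "0 \<le> net_threshold m"
  by (simp add: net_threshold_def)

lemma net_threshold_div_sqrt_le:
  assumes "1 \<le> m"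
  shows "net_threshold m / sqrt (real m) \<le> 216 * (1 + ln (real m))"
proof -
  define r where "r = real (log_factor m)"
  have "1 \<le> r" unfolding r_def using log_factor_ge_1[of m] by simp
  have "net_threshold m / sqrt (real m) = sqrt (128 * r)"
    using assms unfolding net_threshold_def r_def by (simp add: real_sqrt_mult)
  also have "\<dots> \<le> sqrt ((12 * r)\<^sup>2)"
    using \<open>1 \<le> r\<close> by (intro real_sqrt_le_mono) (simp add: power2_eq_square)
  also have "\<dots> = 12 * r" using \<open>1 \<le> r\<close> by (intro real_sqrt_unique) auto
  also have "\<dots> \<le> 216 * (1 + ln (real m))"
    using log_factor_le[OF assms] unfolding r_def by simp
  finally show ?thesis .
qed

lemma growth_factor_le_log:
  assumes "1 \<le> m"
  shows "5 * (1 + (4 * net_threshold m + \<bar>R\<bar>) / sqrt (real m)) \<le> 5 * (865 + \<bar>R\<bar>) * (1 + ln (real m))"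
proof -
  have "0 \<le> ln (real m)" using assms by simp
  have "\<bar>R\<bar> / sqrt (real m) \<le> \<bar>R\<bar>"
    using assms by (simp add: divide_le_eq mult_le_cancel_left1 mult_right_mono[of 1 "sqrt (real m)" "\<bar>R\<bar>"])
  also have "\<dots> \<le> \<bar>R\<bar> * (1 + ln (real m))"
    using \<open>0 \<le> ln (real m)\<close> by (simp add: mult_le_cancel_left1)
  finally have R: "\<bar>R\<bar> / sqrt (real m) \<le> \<bar>R\<bar> * (1 + ln (real m))" .
  have "(4 * net_threshold m + \<bar>R\<bar>) / sqrt (real m) = 4 * (net_threshold m / sqrt (real m)) + \<bar>R\<bar> / sqrt (real m)"
    by (simp add: add_divide_distrib)
  also have "\<dots> \<le> 4 * (216 * (1 + ln (real m))) + \<bar>R\<bar> * (1 + ln (real m))"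
    using R net_threshold_div_sqrt_le[OF assms] by linarith
  also have "\<dots> \<le> (865 + \<bar>R\<bar>) * (1 + ln (real m)) - 1"
    using \<open>0 \<le> ln (real m)\<close> by (simp add: algebra_simps)
  finally have "1 + (4 * net_threshold m + \<bar>R\<bar>) / sqrt (real m) \<le> (865 + \<bar>R\<bar>) * (1 + ln (real m))"
    by simp
  then have "5 * (1 + (4 * net_threshold m + \<bar>R\<bar>) / sqrt (real m)) \<le> 5 * ((865 + \<bar>R\<bar>) * (1 + ln (real m)))"
    by (rule mult_left_mono) simp
  then show ?thesis by (simp only: mult.assoc)
qed

lemma op_norm_le_W20_of_good_event:
  assumes "0 < m" "\<omega> \<in> good_event L n m" "l \<in> {1..L}"
  shows "op_norm_le m (W20_of \<omega> l) (4 * net_threshold m)"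
  using assms by (intro op_norm_le_of_grid_net) (auto simp: good_event_def net_threshold_def less_imp_le)

lemma wdist_nonneg: "0 \<le> wdist L nr nc W V"
  unfolding wdist_def by (intro real_sqrt_ge_zero sum_nonneg) simp

lemma sqrt_layer_le_wdist:
  assumes "l \<in> {1..L}"
  shows "sqrt (\<Sum>i<nr. \<Sum>j<nc. (W l i j - V l i j)\<^sup>2) \<le> wdist L nr nc W V"
  unfolding wdist_def using assms by (intro real_sqrt_le_mono member_le_sum) (auto intro!: sum_nonneg)

lemma op_norm_le_near_good_event:
  assumes "0 < m" "\<omega> \<in> good_event L n m" "wdist L m m W2 (W20_of \<omega>) \<le> R" "l \<in> {1..L}"
  shows "op_norm_le m (W2 l) (4 * net_threshold m + \<bar>R\<bar>)"
proof -
  have "sqrt (\<Sum>i<m. \<Sum>j<m. (W2 l i j - W20_of \<omega> l i j)\<^sup>2) \<le> \<bar>R\<bar>"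
    using sqrt_layer_le_wdist[OF assms(4)] assms(3) by (rule order_trans[OF order_trans]) simp
  then show ?thesis
    by (rule op_norm_le_perturb[OF op_norm_le_W20_of_good_event[OF assms(1,2,4)]])
qed

lemma vnorm_admm_b_le_log:
  assumes "1 \<le> m" "s < m" "\<And>l'. l' \<in> {1..L} \<Longrightarrow> op_norm_le m (W2 l') (4 * net_threshold m + \<bar>R\<bar>)"
  shows "vnorm m (\<lambda>j. admm_b lam n m L W1 W2 y z0 u0 s l j)
    \<le> (5 * (865 + \<bar>R\<bar>)) ^ L * (1 + ln (real m)) ^ L / sqrt (real m)"
proof -
  define X where "X = 5 * (1 + (4 * net_threshold m + \<bar>R\<bar>) / sqrt (real m))"
  have "0 \<le> 4 * net_threshold m + \<bar>R\<bar>" using net_threshold_nonneg[of m] by simp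
  then have "1 \<le> X" unfolding X_def by simp
  have "vnorm m (\<lambda>j. admm_b lam n m L W1 W2 y z0 u0 s l j) \<le> X ^ (L - l) / sqrt (real m)"
    unfolding X_def using assms \<open>0 \<le> 4 * net_threshold m + \<bar>R\<bar>\<close> by (intro vnorm_admm_b_le) auto
  also have "\<dots> \<le> X ^ L / sqrt (real m)"
    using \<open>1 \<le> X\<close> by (intro divide_right_mono power_increasing) auto
  also have "\<dots> \<le> (5 * (865 + \<bar>R\<bar>) * (1 + ln (real m))) ^ L / sqrt (real m)"
    unfolding X_def using growth_factor_le_log[OF assms(1)] \<open>1 \<le> X\<close>
    by (intro divide_right_mono power_mono) (auto simp: X_def)
  finally show ?thesis by (simp add: power_mult_distrib)
qed

lemma vnorm_admm_b_diff_le: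
  assumes "1 \<le> m" "\<omega> \<in> good_event L n m" "wdist L m m W2 (W20_of \<omega>) \<le> R" "s < m"
  shows "vnorm m (\<lambda>j. admm_b lam n m L W1 W2 y z0 u0 s l j
                        - admm_b lam n m L (W10_of \<omega>) (W20_of \<omega>) y z0 u0 s l j)
    \<le> 2 * (5 * (865 + \<bar>R\<bar>)) ^ L * (1 + ln (real m)) ^ L / sqrt (real m)"
proof -
  have "0 \<le> R" using wdist_nonneg assms(3) by (rule order_trans)
  then have "wdist L m m (W20_of \<omega>) (W20_of \<omega>) \<le> R" by (simp add: wdist_def)
  then have "vnorm m (\<lambda>j. admm_b lam n m L (W10_of \<omega>) (W20_of \<omega>) y z0 u0 s l j)
      \<le> (5 * (865 + \<bar>R\<bar>)) ^ L * (1 + ln (real m)) ^ L / sqrt (real m)"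
    using assms by (intro vnorm_admm_b_le_log op_norm_le_near_good_event) auto
  moreover have "vnorm m (\<lambda>j. admm_b lam n m L W1 W2 y z0 u0 s l j)
      \<le> (5 * (865 + \<bar>R\<bar>)) ^ L * (1 + ln (real m)) ^ L / sqrt (real m)"
    using assms by (intro vnorm_admm_b_le_log op_norm_le_near_good_event) auto
  ultimately show ?thesis
    using vnorm_diff_le[of m "\<lambda>j. admm_b lam n m L W1 W2 y z0 u0 s l j"
        "\<lambda>j. admm_b lam n m L (W10_of \<omega>) (W20_of \<omega>) y z0 u0 s l j"] by simp
qed

lemma good_event_admm_b_diff_bound:
  assumes "1 \<le> m"
  shows "\<exists>A\<in>sets (gauss_init L n m). 1 - real L / 2 ^ m \<le> measure (gauss_init L n m) A \<and>
    (\<forall>\<omega>\<in>A. \<forall>W1 W2. wdist L m m W2 (W20_of \<omega>) \<le> R \<longrightarrow> (\<forall>s<m. \<forall>l.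
       vnorm m (\<lambda>j. admm_b lam n m L W1 W2 y z0 u0 s l j - admm_b lam n m L (W10_of \<omega>) (W20_of \<omega>) y z0 u0 s l j)
         \<le> 2 * (5 * (865 + \<bar>R\<bar>)) ^ L * (1 + ln (real m)) ^ L / sqrt (real m)))"
  using assms good_event_in_sets prob_good_event_ge vnorm_admm_b_diff_le
  by (intro bexI[of _ "good_event L n m"] conjI ballI allI impI) auto

theorem lemma12:
  fixes lam Cy Cz Cu R1 R2 :: real and L n :: nat
  assumes "lam > 0"
  shows "\<exists>C (k::nat) (\<delta>::nat \<Rightarrow> real). (\<delta> \<longlonglongrightarrow> 0) \<and>
    (\<forall>\<^sub>F m in sequentially.
      \<forall>y z0 u0. (\<forall>i<n. \<bar>y i\<bar> \<le> Cy) \<and> (\<forall>i<m. \<bar>z0 i\<bar> \<le> Cz) \<and> (\<forall>i<m. \<bar>u0 i\<bar> \<le> Cu) \<longrightarrow>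
        (\<exists>A \<in> sets (gauss_init L n m).
           measure (gauss_init L n m) A \<ge> 1 - \<delta> m \<and>
           (\<forall>\<omega>\<in>A. \<forall>W1 W2.
              wdist L m n W1 (W10_of \<omega>) \<le> R1 \<and> wdist L m m W2 (W20_of \<omega>) \<le> R2 \<longrightarrow>
              (\<forall>s<m. \<forall>l\<in>{1..L-1}.
                 vnorm m (\<lambda>j. admm_b lam n m L W1 W2 y z0 u0 s l j
                              - admm_b lam n m L (W10_of \<omega>) (W20_of \<omega>) y z0 u0 s l j)
                   \<le> C * (1 + ln (real m)) ^ k / sqrt (real m)))))"
proof -
  have "(\<lambda>m. real L / 2 ^ m) \<longlonglongrightarrow> 0"
    using tendsto_mult[OF tendsto_const LIMSEQ_inverse_realpow_zero[of 2], of "real L"]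
    by (simp add: divide_inverse)
  then show ?thesis
    using good_event_admm_b_diff_bound[where R=R2]
    by (intro exI[of _ "2 * (5 * (865 + \<bar>R2\<bar>)) ^ L"] exI[of _ L] exI[of _ "\<lambda>m. real L / 2 ^ m"]
        conjI eventually_sequentiallyI[of 1]) fastforce+
qed

end
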